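(* For every integer $d\ge2$, $$I_{1-\frac1d}\Big(\frac{d+1}{2},\frac12\Big)\ge\frac{1}{8\sqrt{6\pi}},$$ where $I_x(a,b)=B_x(a,b)/B(a,b)$ is the regularized incomplete beta function, $B_x(a,b)=\int_0^xt^{a-1}(1-t)^{b-1}dt$ and $B(a,b)=B_1(a,b)$. *)

theory Defs
  imports "HOL-Analysis.Analysis"
begin

text \<open>Incomplete beta function B_x(a,b) = integral over [0,x] of t^(a-1) (1-t)^(b-1),
  as a Lebesgue interval integral (so the improper endpoint singularity at t = 1 is handled).\<close>
definition incBeta :: "real \<Rightarrow> real \<Rightarrow> real \<Rightarrow> real" where
  "incBeta x a b = (LBINT t=0..x. t powr (a - 1) * (1 - t) powr (b - 1))"

definition completeBeta :: "real \<Rightarrow> real \<Rightarrow> real" where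
  "completeBeta a b = incBeta 1 a b"

definition regIncBeta :: "real \<Rightarrow> real \<Rightarrow> real \<Rightarrow> real" where
  "regIncBeta x a b = incBeta x a b / completeBeta a b"

end

theory Submission
  imports Defs
begin

text \<open>
  Write f(t) = t powr ((d - 1) / 2) * (1 - t) powr (-1/2) for the integrand and v = 1 - 1/d.
  Since t powr ((d - 1) / 2) \<le> 1, the tail of f over [v, 1] is at most the integral of
  (1 - t) powr (-1/2), namely 2 / sqrt d. On [1 - 3/(2d), v] the integrand is increasing, and
  (1 - 3/(2d)) powr ((d - 1)/2) \<ge> exp (-3/2) \<ge> 1/6 because ln (1 - y) \<ge> -y/(1 - y); so the
  rectangle of width 1/(2d) under f shows that the integral over [0, v] is at least
  1 / (6 * sqrt (6 * d)). The ratio is therefore at least 1 / (1 + 12 * sqrt 6), which beats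
  1 / (8 * sqrt (6 * pi)) because sqrt pi > 1.7.
\<close>

abbreviation betaIntegrand :: "real \<Rightarrow> real \<Rightarrow> real \<Rightarrow> real" where
  "betaIntegrand a b t \<equiv> t powr (a - 1) * (1 - t) powr (b - 1)"

lemma interval_integral_one_minus_powr:
  fixes b v :: real
  assumes "0 < b" "v < 1"
  shows "set_integrable lborel {v<..<1} (\<lambda>t. (1 - t) powr (b - 1))"
    and "(LBINT t=v..1. (1 - t) powr (b - 1)) = (1 - v) powr b / b"
proof -
  define F where "F t = - ((1 - t) powr b / b)" for t :: real
  have F_deriv: "DERIV F t :> (1 - t) powr (b - 1)" if "t < 1" for t
  proof -
    have "DERIV (\<lambda>t. (1 - t) powr b) t :> b * (1 - t) powr (b - 1) * (0 - 1)"
      using that by (intro DERIV_fun_powr derivative_eq_intros) auto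
    then have "DERIV F t :> - (b * (1 - t) powr (b - 1) * (0 - 1) / b)"
      unfolding F_def by (intro DERIV_minus DERIV_cdivide)
    then show ?thesis
      using \<open>0 < b\<close> by simp
  qed
  have F_cont: "continuous_on {..1} F"
    unfolding F_def using \<open>0 < b\<close>
    by (intro continuous_on_minus continuous_on_divide continuous_on_powr' continuous_intros) auto
  have "(F \<longlongrightarrow> F v) (at_right v)"
    using DERIV_isCont[OF F_deriv[OF \<open>v < 1\<close>]] unfolding isCont_def
    by (rule tendsto_within_subset) simp
  then have at_v: "((F \<circ> real_of_ereal) \<longlongrightarrow> F v) (at_right (ereal v))"
    unfolding ereal_tendsto_simps1 .
  have "(F \<longlongrightarrow> F 1) (at 1 within {..1})"
    using F_cont by (simp add: continuous_on_def)
  then have "(F \<longlongrightarrow> F 1) (at_left 1)"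
    by (rule tendsto_within_subset) auto
  then have at_1: "((F \<circ> real_of_ereal) \<longlongrightarrow> F 1) (at_left (ereal 1))"
    unfolding ereal_tendsto_simps1 .
  have v_1: "ereal v < ereal 1" using \<open>v < 1\<close> by simp
  have F_deriv': "DERIV F t :> (1 - t) powr (b - 1)" if "ereal v < ereal t" "ereal t < ereal 1" for t
    using F_deriv that by simp
  have f_cont: "isCont (\<lambda>t. (1 - t) powr (b - 1)) t" if "ereal v < ereal t" "ereal t < ereal 1" for t
    using that by (intro continuous_intros) auto
  have f_nonneg: "AE t in lborel. ereal v < ereal t \<longrightarrow> ereal t < ereal 1 \<longrightarrow> 0 \<le> (1 - t) powr (b - 1)"
    by simp
  note FTC = interval_integral_FTC_nonneg[OF v_1 F_deriv' f_cont f_nonneg at_v at_1]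
  show "set_integrable lborel {v<..<1} (\<lambda>t. (1 - t) powr (b - 1))"
    using FTC(1) by simp
  have "F 1 - F v = (1 - v) powr b / b" by (simp add: F_def)
  then show "(LBINT t=v..1. (1 - t) powr (b - 1)) = (1 - v) powr b / b"
    using FTC(2) by (simp add: one_ereal_def)
qed

lemma betaIntegrand_bounds:
  assumes "1 \<le> a" "0 < t" "t < 1"
  shows "0 \<le> betaIntegrand a b t" and "betaIntegrand a b t \<le> (1 - t) powr (b - 1)"
proof -
  have "t powr (a - 1) \<le> 1 powr (a - 1)"
    using assms by (intro powr_mono2) auto
  then show "betaIntegrand a b t \<le> (1 - t) powr (b - 1)"
    using mult_right_mono[of _ 1 "(1 - t) powr (b - 1)"] by simp
qed simp

lemma betaIntegrand_mono:
  assumes "1 \<le> a" "b \<le> 1" "0 \<le> u" "u \<le> t" "t < 1"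
  shows "betaIntegrand a b u \<le> betaIntegrand a b t"
  using assms by (intro mult_mono powr_mono2 powr_mono2') auto

lemma interval_integrable_betaIntegrand:
  assumes "1 \<le> a" "0 < b" "0 \<le> u" "u \<le> v" "v \<le> 1"
  shows "interval_lebesgue_integrable lborel (ereal u) (ereal v) (betaIntegrand a b)"
proof -
  have "set_integrable lborel {0<..<1} (betaIntegrand a b)"
  proof (rule set_integrable_bound)
    show "set_integrable lborel {0<..<1} (\<lambda>t. (1 - t) powr (b - 1))"
      using interval_integral_one_minus_powr(1)[of b 0] \<open>0 < b\<close> by simp
    show "set_borel_measurable lborel {0<..<1} (betaIntegrand a b)"
      unfolding set_borel_measurable_def by measurable
    show "AE t in lborel. t \<in> {0<..<1} \<longrightarrow>
        norm (betaIntegrand a b t) \<le> norm ((1 - t) powr (b - 1))"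
      using betaIntegrand_bounds[OF \<open>1 \<le> a\<close>] by (intro AE_I2) auto
  qed
  then show ?thesis
    unfolding interval_lebesgue_integrable_def using assms
    by (auto intro: set_integrable_subset)
qed

lemma interval_integral_mono:
  fixes f g :: "real \<Rightarrow> real"
  assumes "u \<le> v"
    and "interval_lebesgue_integrable lborel (ereal u) (ereal v) f"
    and "interval_lebesgue_integrable lborel (ereal u) (ereal v) g"
    and "\<And>t. u < t \<Longrightarrow> t < v \<Longrightarrow> f t \<le> g t"
  shows "(LBINT t=ereal u..ereal v. f t) \<le> (LBINT t=ereal u..ereal v. g t)"
proof -
  have "(LBINT t:{u<..<v}. f t) \<le> (LBINT t:{u<..<v}. g t)"
    using assms(2-4) unfolding interval_lebesgue_integrable_def einterval_eq
    by (intro set_integral_mono) (simp_all add: \<open>u \<le> v\<close>)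
  then show ?thesis
    using \<open>u \<le> v\<close> by (simp add: interval_lebesgue_integral_le_eq)
qed

lemma interval_integral_betaIntegrand_nonneg:
  assumes "1 \<le> a" "0 < b" "0 \<le> u" "u \<le> v" "v \<le> 1"
  shows "0 \<le> (LBINT t=ereal u..ereal v. betaIntegrand a b t)"
  using interval_integral_mono[of u v "\<lambda>_. 0" "betaIntegrand a b"]
    interval_integrable_betaIntegrand[OF assms] betaIntegrand_bounds(1)[OF \<open>1 \<le> a\<close>] assms
  by simp

lemma incBeta_split:
  assumes "1 \<le> a" "0 < b" "0 \<le> u" "u \<le> v" "v \<le> 1"
  shows "incBeta v a b = incBeta u a b + (LBINT t=ereal u..ereal v. betaIntegrand a b t)"
proof -
  have "min (ereal 0) (min (ereal u) (ereal v)) = ereal 0"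
    and "max (ereal 0) (max (ereal u) (ereal v)) = ereal v"
    using assms by auto
  then have "(LBINT t=ereal 0..ereal u. betaIntegrand a b t) + (LBINT t=ereal u..ereal v. betaIntegrand a b t)
      = (LBINT t=ereal 0..ereal v. betaIntegrand a b t)"
    using interval_integrable_betaIntegrand[of a b 0 v] assms
    by (intro interval_integral_sum) simp
  then show ?thesis
    unfolding incBeta_def by (simp add: zero_ereal_def)
qed

lemma completeBeta_minus_incBeta_bounds:
  assumes "1 \<le> a" "0 < b" "0 \<le> v" "v < 1"
  shows "0 \<le> completeBeta a b - incBeta v a b"
    and "completeBeta a b - incBeta v a b \<le> (1 - v) powr b / b"
proof -
  have tail: "completeBeta a b - incBeta v a b = (LBINT t=ereal v..ereal 1. betaIntegrand a b t)"
    unfolding completeBeta_def using incBeta_split[of a b v 1] assms by simp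
  then show "0 \<le> completeBeta a b - incBeta v a b"
    using interval_integral_betaIntegrand_nonneg[of a b v 1] assms by simp
  have "(LBINT t=ereal v..ereal 1. betaIntegrand a b t)
      \<le> (LBINT t=ereal v..ereal 1. (1 - t) powr (b - 1))"
    using interval_integrable_betaIntegrand[of a b v 1] assms
      interval_integral_one_minus_powr(1)[OF \<open>0 < b\<close> \<open>v < 1\<close>]
      betaIntegrand_bounds(2)[OF \<open>1 \<le> a\<close>]
    by (intro interval_integral_mono) (simp_all add: interval_lebesgue_integrable_def one_ereal_def)
  also have "\<dots> = (1 - v) powr b / b"
    using interval_integral_one_minus_powr(2)[OF \<open>0 < b\<close> \<open>v < 1\<close>] by (simp add: one_ereal_def)
  finally show "completeBeta a b - incBeta v a b \<le> (1 - v) powr b / b"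
    using tail by simp
qed

lemma incBeta_ge_rectangle:
  assumes "1 \<le> a" "0 < b" "b \<le> 1" "0 \<le> u" "u \<le> v" "v < 1"
  shows "(v - u) * betaIntegrand a b u \<le> incBeta v a b"
proof -
  have "(v - u) * betaIntegrand a b u = (LBINT t=ereal u..ereal v. betaIntegrand a b u)"
    by (simp add: mult.commute)
  also have "\<dots> \<le> (LBINT t=ereal u..ereal v. betaIntegrand a b t)"
    using interval_integrable_betaIntegrand[of a b u v] betaIntegrand_mono[of a b u] assms
    by (intro interval_integral_mono) simp_all
  finally show ?thesis
    using incBeta_split[of a b u v] interval_integral_betaIntegrand_nonneg[of a b 0 u] assms
    by (simp add: incBeta_def zero_ereal_def)
qed

lemma powr_one_minus_ge_exp:
  fixes y p :: real
  assumes "0 \<le> y" "y < 1" "0 \<le> p"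
  shows "exp (- (p * y / (1 - y))) \<le> (1 - y) powr p"
proof -
  have "- ln (1 - y) \<le> 1 / (1 - y) - 1"
    using ln_le_minus_one[of "1 / (1 - y)"] assms by (simp add: ln_div)
  also have "1 / (1 - y) - 1 = y / (1 - y)"
    using assms by (simp add: field_simps)
  finally have "p * (- (y / (1 - y))) \<le> p * ln (1 - y)"
    using assms by (intro mult_left_mono) auto
  then have "exp (- (p * y / (1 - y))) \<le> exp (p * ln (1 - y))"
    by simp
  also have "\<dots> = (1 - y) powr p"
    using assms by (simp add: powr_def mult.commute)
  finally show ?thesis .
qed

lemma exp_neg_three_halves_ge: "1 / 6 \<le> exp (- (3 / 2 :: real))"
proof -
  have "exp (3 / 2 :: real) ^ 2 = exp 3"
    by (simp add: exp_double[symmetric])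
  also have "exp (3 :: real) = exp 1 ^ 3"
    by (simp add: exp_of_nat_mult[symmetric])
  also have "\<dots> \<le> 3 ^ 3"
    using exp_le by (intro power_mono) auto
  finally have "exp (3 / 2 :: real) ^ 2 \<le> 6 ^ 2"
    by simp
  then have "exp (3 / 2 :: real) \<le> 6"
    by (rule power2_le_imp_le) simp
  then have "1 / 6 \<le> 1 / exp (3 / 2 :: real)"
    by (intro divide_left_mono) auto
  then show ?thesis
    by (simp add: exp_minus inverse_eq_divide)
qed

lemma incBeta_lower_bound:
  fixes x :: real
  assumes "2 \<le> x"
  shows "1 / (6 * sqrt (6 * x)) \<le> incBeta (1 - 1 / x) ((x + 1) / 2) (1 / 2)"
proof -
  define y where "y = 3 / (2 * x)"
  have y: "0 < y" "y \<le> 3 / 4" using assms by (auto simp: y_def field_simps)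
  have "((x + 1) / 2 - 1) * y / (1 - y) \<le> 3 / 2"
    using assms by (simp add: y_def field_simps)
  then have "1 / 6 \<le> exp (- (((x + 1) / 2 - 1) * y / (1 - y)))"
    using exp_neg_three_halves_ge by (simp add: order_trans)
  also have "\<dots> \<le> (1 - y) powr ((x + 1) / 2 - 1)"
    using assms y by (intro powr_one_minus_ge_exp) auto
  finally have "1 / 6 * (1 / sqrt y) \<le> (1 - y) powr ((x + 1) / 2 - 1) * (1 / sqrt y)"
    using y by (intro mult_right_mono) auto
  moreover have "(1 - (1 - y)) powr (1 / 2 - 1) = 1 / sqrt y"
    using y by (simp add: powr_minus_divide powr_half_sqrt)
  ultimately have integrand: "1 / 6 * (1 / sqrt y) \<le> betaIntegrand ((x + 1) / 2) (1 / 2) (1 - y)"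
    by simp
  have "sqrt (6 * x) = 2 * x * sqrt y"
  proof -
    have "6 * x = (2 * x) ^ 2 * y" using assms by (simp add: y_def power2_eq_square)
    then have "sqrt (6 * x) = sqrt ((2 * x) ^ 2) * sqrt y"
      by (simp only: real_sqrt_mult)
    then show ?thesis using assms by (simp only: real_sqrt_abs)
  qed
  then have "1 / (6 * sqrt (6 * x)) = 1 / (2 * x) * (1 / 6 * (1 / sqrt y))"
    by simp
  also have "\<dots> \<le> 1 / (2 * x) * betaIntegrand ((x + 1) / 2) (1 / 2) (1 - y)"
    using integrand assms by (intro mult_left_mono) auto
  also have "1 / (2 * x) = (1 - 1 / x) - (1 - y)"
    using assms by (simp add: y_def field_simps)
  also have "\<dots> * betaIntegrand ((x + 1) / 2) (1 / 2) (1 - y) \<le> incBeta (1 - 1 / x) ((x + 1) / 2) (1 / 2)"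
  proof (rule incBeta_ge_rectangle)
    show "1 - y \<le> 1 - 1 / x"
      using assms by (simp add: y_def field_simps)
  qed (use assms y in auto)
  finally show ?thesis .
qed

lemma one_plus_twelve_sqrt_six_le: "1 + 12 * sqrt 6 \<le> 8 * sqrt (6 * pi)"
proof -
  have sqrt_pi: "1.7 \<le> sqrt pi"
    using pi_gt3 by (intro real_le_rsqrt) (simp add: power2_eq_square)
  have "1 \<le> sqrt (6 :: real)" by simp
  then have "1 + 12 * sqrt 6 \<le> 8 * sqrt 6 * 1.7" by linarith
  also have "\<dots> \<le> 8 * sqrt 6 * sqrt pi"
    using sqrt_pi by (intro mult_left_mono) auto
  also have "\<dots> = 8 * sqrt (6 * pi)"
    by (simp add: real_sqrt_mult)
  finally show ?thesis .
qed

lemma ratio_ge_of_head_tail_bounds: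
  fixes x N T :: real
  assumes "0 < x" "1 / (6 * sqrt (6 * x)) \<le> N" "0 \<le> T" "T \<le> 2 / sqrt x"
  shows "1 / (8 * sqrt (6 * pi)) \<le> N / (N + T)"
proof -
  have "0 < 1 / (6 * sqrt (6 * x))"
    using assms(1) by simp
  with assms(2) have N_pos: "0 < N"
    by linarith
  have "2 / sqrt x = 12 * sqrt 6 * (1 / (6 * sqrt (6 * x)))"
    using assms(1) by (simp add: real_sqrt_mult field_simps)
  also have "\<dots> \<le> 12 * sqrt 6 * N"
    using assms(2) by (intro mult_left_mono) auto
  finally have "N + T \<le> (1 + 12 * sqrt 6) * N"
    using assms(4) by (simp add: algebra_simps)
  also have "\<dots> \<le> 8 * sqrt (6 * pi) * N"
    using one_plus_twelve_sqrt_six_le N_pos by (intro mult_right_mono) auto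
  finally show ?thesis
    using N_pos assms(3) by (simp add: field_simps)
qed

theorem mainTheorem7:
  fixes d :: int
  assumes "d \<ge> 2"
  shows "regIncBeta (1 - 1 / real_of_int d) ((real_of_int d + 1) / 2) (1 / 2)
           \<ge> 1 / (8 * sqrt (6 * pi))"
proof -
  define x where "x = real_of_int d"
  have x: "2 \<le> x" using assms by (simp add: x_def)
  let ?a = "(x + 1) / 2" and ?v = "1 - 1 / x"
  have tail: "0 \<le> completeBeta ?a (1 / 2) - incBeta ?v ?a (1 / 2)"
      "completeBeta ?a (1 / 2) - incBeta ?v ?a (1 / 2) \<le> 2 / sqrt x"
    using completeBeta_minus_incBeta_bounds[of ?a "1 / 2" ?v] x
    by (auto simp: powr_half_sqrt real_sqrt_divide)
  have "1 / (8 * sqrt (6 * pi))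
      \<le> incBeta ?v ?a (1 / 2) / (incBeta ?v ?a (1 / 2) + (completeBeta ?a (1 / 2) - incBeta ?v ?a (1 / 2)))"
    using ratio_ge_of_head_tail_bounds[OF _ incBeta_lower_bound[OF x] tail] x by simp
  then show ?thesis
    by (simp add: regIncBeta_def x_def)
qed

end
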